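(* Let $0<\varepsilon\le1$ and let $\mathfrak L_0$ be the linear span of $\{e^{-\alpha x^2/(2\sqrt\varepsilon)}:\alpha\in(0,1)\}$. Then $\mathfrak L_0\subset D(S_\varepsilon)$.
   Context: Work in $L^2(\mathbb{R})$. Let $q$ be multiplication by $x$ and $p=-i\,d/dx$ (self-adjoint; $q$ injective). Let $t=q^{-1}p$ with $D(t)=\{f\in D(p):pf\in D(q^{-1})\}$ and $L^2_0$ the subspace of even functions. Define $S_\varepsilon$ in $L^2_0$ by $D(S_\varepsilon)=\{f\in L^2_0\cap\bigcap_{n\ge0}D(t^{2n+1}):\lim_{N\to\infty}\sum_{n=0}^N\frac{(-1)^n}{2n+1}(\sqrt\varepsilon t)^{2n+1}f$ exists in norm$\}$, $S_\varepsilon f=-\varepsilon^{-1/2}\sum_{n\ge0}\frac{(-1)^n}{2n+1}(\sqrt\varepsilon t)^{2n+1}f$. *)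

theory Defs
  imports "HOL-Analysis.Analysis"
begin

text \<open>Elements of L^2(R) are represented by complex-valued functions on the reals,
  modulo equality almost everywhere w.r.t. Lebesgue measure.\<close>

definition L2 :: "(real \<Rightarrow> complex) \<Rightarrow> bool" where
  "L2 f \<longleftrightarrow> f \<in> borel_measurable lborel \<and> integrable lborel (\<lambda>x. (cmod (f x))\<^sup>2)"

definition l2_norm :: "(real \<Rightarrow> complex) \<Rightarrow> real" where
  "l2_norm f = sqrt (integral\<^sup>L lborel (\<lambda>x. (cmod (f x))\<^sup>2))"

text \<open>Graph of p = -i d/dx (self-adjoint, domain H^1): f has an absolutely continuous
  representative f(x) = c + i * integral from 0 to x of h, with h = p f in L^2.\<close>

definition p_rel :: "(real \<Rightarrow> complex) \<Rightarrow> (real \<Rightarrow> complex) \<Rightarrow> bool" where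
  "p_rel f h \<longleftrightarrow> L2 f \<and> L2 h \<and>
     (\<exists>c. AE x in lborel. f x = c + \<i> * interval_lebesgue_integral lborel (ereal 0) (ereal x) h)"

text \<open>Graph of t = q^{-1} p: g = t f iff p f = x * g with g in L^2.\<close>

definition t_rel :: "(real \<Rightarrow> complex) \<Rightarrow> (real \<Rightarrow> complex) \<Rightarrow> bool" where
  "t_rel f g \<longleftrightarrow> (\<exists>h. p_rel f h \<and> L2 g \<and> (AE x in lborel. h x = complex_of_real x * g x))"

fun tpow_rel :: "nat \<Rightarrow> (real \<Rightarrow> complex) \<Rightarrow> (real \<Rightarrow> complex) \<Rightarrow> bool" where
  "tpow_rel 0 f g \<longleftrightarrow> L2 f \<and> g = f"
| "tpow_rel (Suc n) f g \<longleftrightarrow> (\<exists>h. tpow_rel n f h \<and> t_rel h g)"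

definition in_dom_S :: "real \<Rightarrow> (real \<Rightarrow> complex) \<Rightarrow> bool" where
  "in_dom_S \<epsilon> f \<longleftrightarrow> L2 f \<and> (AE x in lborel. f (- x) = f x) \<and>
     (\<exists>g :: nat \<Rightarrow> real \<Rightarrow> complex. (\<forall>n. tpow_rel (2 * n + 1) f (g n)) \<and>
        (\<exists>L. L2 L \<and>
          (\<lambda>N. l2_norm (\<lambda>x. (\<Sum>n\<le>N. complex_of_real ((-1) ^ n / real (2 * n + 1)
                   * sqrt \<epsilon> ^ (2 * n + 1)) * g n x) - L x)) \<longlonglongrightarrow> 0))"

end

theory Submission
  imports Defs "HOL-Probability.Distributions"
begin

text \<open>A Gaussian \<open>exp (- \<beta> x\<^sup>2 / 2)\<close> with \<open>\<beta> > 0\<close> satisfies \<open>p g = i \<beta> x g\<close>, so it is an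
  eigenvector of \<open>t = q\<^sup>-\<^sup>1 p\<close> with eigenvalue \<open>i \<beta>\<close>. For \<open>\<beta> = \<alpha> / \<surd>\<epsilon>\<close> the \<open>n\<close>-th term of the
  series defining \<open>S\<^sub>\<epsilon>\<close> multiplies the Gaussian by \<open>(-1)\<^sup>n (i \<alpha>)\<^bsup>2n+1\<^esup> / (2n+1) = i \<alpha>\<^bsup>2n+1\<^esup> / (2n+1)\<close>,
  the terms of \<open>i artanh \<alpha>\<close>, which are summable because \<open>\<alpha> < 1\<close>. On a finite linear combination
  of Gaussians, convergence in \<open>L\<^sup>2\<close> thus reduces to convergence of finitely many scalar series.\<close>

lemma integrable_gaussian_moment:
  fixes b :: real
  assumes "0 < b"
  shows "integrable lborel (\<lambda>x. exp (- b * x\<^sup>2 / 2) * x ^ k)"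
proof -
  define \<sigma> where "\<sigma> = 1 / sqrt b"
  have "0 < \<sigma>"
    using assms by (simp add: \<sigma>_def)
  then have "integrable lborel (\<lambda>x. sqrt (2 * pi * \<sigma>\<^sup>2) * (normal_density 0 \<sigma> x * (x - 0) ^ k))"
    by (intro integrable_mult_right integrable_normal_moment)
  moreover have "sqrt (2 * pi * \<sigma>\<^sup>2) * (normal_density 0 \<sigma> x * (x - 0) ^ k) = exp (- b * x\<^sup>2 / 2) * x ^ k"
    for x using assms by (simp add: normal_density_def \<sigma>_def power_divide)
  ultimately show ?thesis by (simp only:)
qed

lemma L2_cmult: "L2 f \<Longrightarrow> L2 (\<lambda>x. c * f x)"
  unfolding L2_def by (auto simp: norm_mult power_mult_distrib)

lemma L2_add:
  assumes "L2 f" "L2 g"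
  shows "L2 (\<lambda>x. f x + g x)"
  unfolding L2_def
proof
  have [measurable]: "f \<in> borel_measurable borel" "g \<in> borel_measurable borel"
    using assms unfolding L2_def by auto
  show "(\<lambda>x. f x + g x) \<in> borel_measurable lborel"
    by measurable
  show "integrable lborel (\<lambda>x. (cmod (f x + g x))\<^sup>2)"
  proof (rule Bochner_Integration.integrable_bound)
    show "integrable lborel (\<lambda>x. 2 * (cmod (f x))\<^sup>2 + 2 * (cmod (g x))\<^sup>2)"
      using assms unfolding L2_def by auto
    show "(\<lambda>x. (cmod (f x + g x))\<^sup>2) \<in> borel_measurable lborel"
      by measurable
    show "AE x in lborel. norm ((cmod (f x + g x))\<^sup>2) \<le> norm (2 * (cmod (f x))\<^sup>2 + 2 * (cmod (g x))\<^sup>2)"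
    proof (rule AE_I2)
      fix x
      have "(cmod (f x + g x))\<^sup>2 \<le> (cmod (f x) + cmod (g x))\<^sup>2"
        by (simp add: power_mono norm_triangle_ineq)
      also have "\<dots> \<le> 2 * (cmod (f x))\<^sup>2 + 2 * (cmod (g x))\<^sup>2"
        using zero_le_power2[of "cmod (f x) - cmod (g x)"] by (simp add: power2_diff power2_sum)
      finally show "norm ((cmod (f x + g x))\<^sup>2) \<le> norm (2 * (cmod (f x))\<^sup>2 + 2 * (cmod (g x))\<^sup>2)"
        by simp
    qed
  qed
qed

lemma L2_sum:
  assumes "finite A" "\<And>k. k \<in> A \<Longrightarrow> L2 (f k)"
  shows "L2 (\<lambda>x. \<Sum>k\<in>A. f k x)"
  using assms
proof (induction A rule: finite_induct)
  case empty
  then show ?case by (simp add: L2_def)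
next
  case insert
  then show ?case by (simp add: L2_add)
qed

lemma L2_monomial_gaussian:
  fixes b :: real
  assumes "0 < b"
  shows "L2 (\<lambda>x. complex_of_real (x ^ j * exp (- b * x\<^sup>2 / 2)))"
  unfolding L2_def
proof
  show "(\<lambda>x. complex_of_real (x ^ j * exp (- b * x\<^sup>2 / 2))) \<in> borel_measurable lborel"
    by measurable
  have "(cmod (complex_of_real (x ^ j * exp (- b * x\<^sup>2 / 2))))\<^sup>2 = exp (- (2 * b) * x\<^sup>2 / 2) * x ^ (2 * j)"
    for x
  proof -
    have "exp (- b * x\<^sup>2 / 2) ^ 2 = exp (- (2 * b) * x\<^sup>2 / 2)"
      by (simp add: exp_of_nat_mult[symmetric])
    then show ?thesis
      by (simp only: norm_of_real power2_abs) (simp add: power_mult_distrib power_mult mult.commute)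
  qed
  then show "integrable lborel (\<lambda>x. (cmod (complex_of_real (x ^ j * exp (- b * x\<^sup>2 / 2))))\<^sup>2)"
    using integrable_gaussian_moment[of "2 * b" "2 * j"] assms by simp
qed

definition gaussian_comb :: "(nat \<Rightarrow> real) \<Rightarrow> nat \<Rightarrow> (nat \<Rightarrow> complex) \<Rightarrow> real \<Rightarrow> complex" where
  "gaussian_comb \<beta> m d x = (\<Sum>k<m. d k * complex_of_real (exp (- \<beta> k * x\<^sup>2 / 2)))"

lemma gaussian_comb_sum:
  "(\<Sum>n\<in>A. w n * gaussian_comb \<beta> m (d n) x) = gaussian_comb \<beta> m (\<lambda>k. \<Sum>n\<in>A. w n * d n k) x"
  unfolding gaussian_comb_def by (simp add: sum_distrib_left sum_distrib_right mult.assoc) (rule sum.swap)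

lemma gaussian_comb_diff:
  "gaussian_comb \<beta> m d x - gaussian_comb \<beta> m e x = gaussian_comb \<beta> m (\<lambda>k. d k - e k) x"
  unfolding gaussian_comb_def by (simp add: sum_subtractf left_diff_distrib)

lemma L2_moment_gaussian_comb:
  assumes "\<forall>k<m. 0 < \<beta> k"
  shows "L2 (\<lambda>x. complex_of_real x ^ j * gaussian_comb \<beta> m d x)"
proof -
  have "complex_of_real x ^ j * gaussian_comb \<beta> m d x
      = (\<Sum>k<m. d k * complex_of_real (x ^ j * exp (- \<beta> k * x\<^sup>2 / 2)))" for x
    unfolding gaussian_comb_def by (simp add: sum_distrib_left mult_ac)
  then show ?thesis
    using assms by (simp only:) (intro L2_sum L2_cmult L2_monomial_gaussian; simp)
qed

corollary L2_gaussian_comb: "\<forall>k<m. 0 < \<beta> k \<Longrightarrow> L2 (gaussian_comb \<beta> m d)"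
  using L2_moment_gaussian_comb[of m \<beta> 0 d] by simp

lemma gaussian_comb_has_vector_derivative:
  "(gaussian_comb \<beta> m d has_vector_derivative
     - (complex_of_real x * gaussian_comb \<beta> m (\<lambda>k. complex_of_real (\<beta> k) * d k) x)) (at x)"
proof -
  have "((\<lambda>x. exp (- \<beta> k * x\<^sup>2 / 2)) has_real_derivative exp (- \<beta> k * x\<^sup>2 / 2) * (- \<beta> k * x)) (at x)"
    for k by (auto intro!: derivative_eq_intros)
  then have "(gaussian_comb \<beta> m d has_vector_derivative
      (\<Sum>k<m. d k * complex_of_real (exp (- \<beta> k * x\<^sup>2 / 2) * (- \<beta> k * x)))) (at x)"
    unfolding gaussian_comb_def
    by (intro has_vector_derivative_sum has_vector_derivative_mult_right has_vector_derivative_of_real)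
  then show ?thesis
    by (rule has_vector_derivative_eq_rhs) (simp add: gaussian_comb_def sum_distrib_left sum_negf mult_ac)
qed

lemma p_rel_of_derivative:
  fixes f f' :: "real \<Rightarrow> complex"
  assumes "L2 f" "L2 f'" "\<And>x. (f has_vector_derivative f' x) (at x)" "continuous_on UNIV f'"
  shows "p_rel f (\<lambda>x. - \<i> * f' x)"
  unfolding p_rel_def
proof (intro conjI exI AE_I2)
  show "L2 f" "L2 (\<lambda>x. - \<i> * f' x)"
    using assms(1) L2_cmult[OF assms(2), of "- \<i>"] by simp_all
  fix x :: real
  have "continuous_on {min 0 x..max 0 x} (\<lambda>y. - \<i> * f' y)"
    by (intro continuous_on_mult_left continuous_on_subset[OF assms(4)]) simp
  moreover have "((\<lambda>y. - \<i> * f y) has_vector_derivative - \<i> * f' y) (at y within {min 0 x..max 0 x})" for y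
    using assms(3) by (rule has_vector_derivative_at_within[OF has_vector_derivative_mult_right])
  ultimately have "(LBINT y=ereal 0..ereal x. - \<i> * f' y) = - \<i> * f x - - \<i> * f 0"
    by (rule interval_integral_FTC_finite)
  then show "f x = f 0 + \<i> * (LBINT y=ereal 0..ereal x. - \<i> * f' y)"
    by (simp add: right_diff_distrib mult.assoc[symmetric])
qed

lemma t_rel_gaussian_comb:
  assumes "\<forall>k<m. 0 < \<beta> k"
  shows "t_rel (gaussian_comb \<beta> m d) (gaussian_comb \<beta> m (\<lambda>k. \<i> * complex_of_real (\<beta> k) * d k))"
proof -
  define f' where "f' x = - (complex_of_real x * gaussian_comb \<beta> m (\<lambda>k. complex_of_real (\<beta> k) * d k) x)" for x
  have "p_rel (gaussian_comb \<beta> m d) (\<lambda>x. - \<i> * f' x)"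
  proof (rule p_rel_of_derivative)
    show "L2 (gaussian_comb \<beta> m d)"
      using assms by (rule L2_gaussian_comb)
    show "L2 f'"
      unfolding f'_def using L2_cmult[OF L2_moment_gaussian_comb[OF assms, of 1], of "-1"] by simp
    show "(gaussian_comb \<beta> m d has_vector_derivative f' x) (at x)" for x
      unfolding f'_def by (rule gaussian_comb_has_vector_derivative)
    show "continuous_on UNIV f'"
      unfolding f'_def gaussian_comb_def by (intro continuous_intros) auto
  qed
  moreover have "- \<i> * f' x = complex_of_real x * gaussian_comb \<beta> m (\<lambda>k. \<i> * complex_of_real (\<beta> k) * d k) x" for x
    unfolding f'_def gaussian_comb_def by (simp add: sum_distrib_left sum_negf mult_ac)
  ultimately show ?thesis
    unfolding t_rel_def using L2_gaussian_comb[OF assms] by auto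
qed

lemma tpow_rel_gaussian_comb:
  assumes "\<forall>k<m. 0 < \<beta> k"
  shows "tpow_rel n (gaussian_comb \<beta> m d) (gaussian_comb \<beta> m (\<lambda>k. (\<i> * complex_of_real (\<beta> k)) ^ n * d k))"
proof (induction n)
  case 0
  then show ?case using L2_gaussian_comb[OF assms] by simp
next
  case (Suc n)
  then show ?case
    using t_rel_gaussian_comb[OF assms, of "\<lambda>k. (\<i> * complex_of_real (\<beta> k)) ^ n * d k"]
    by (auto simp: mult.assoc)
qed

lemma l2_norm_cmult: "l2_norm (\<lambda>x. c * f x) = cmod c * l2_norm f"
  unfolding l2_norm_def by (simp add: norm_mult power_mult_distrib real_sqrt_mult)

lemma l2_norm_mono:
  assumes "L2 f" "L2 g" "\<And>x. cmod (f x) \<le> cmod (g x)"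
  shows "l2_norm f \<le> l2_norm g"
  unfolding l2_norm_def
  using assms unfolding L2_def by (intro real_sqrt_le_mono integral_mono power_mono) auto

lemma l2_norm_gaussian_comb_le:
  assumes "\<forall>k<m. 0 < \<beta> k"
  shows "l2_norm (gaussian_comb \<beta> m d) \<le> (\<Sum>k<m. cmod (d k)) * l2_norm (gaussian_comb \<beta> m (\<lambda>_. 1))"
proof -
  define e where "e k x = exp (- \<beta> k * x\<^sup>2 / 2)" for k x
  have "cmod (gaussian_comb \<beta> m d x) \<le> cmod (complex_of_real (\<Sum>k<m. cmod (d k)) * gaussian_comb \<beta> m (\<lambda>_. 1) x)"
    for x
  proof -
    have "cmod (gaussian_comb \<beta> m d x) \<le> (\<Sum>k<m. cmod (d k) * e k x)"
      unfolding gaussian_comb_def e_def by (rule order_trans[OF norm_sum]) (simp add: norm_mult)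
    also have "\<dots> \<le> (\<Sum>k<m. cmod (d k) * (\<Sum>j<m. e j x))"
      by (intro sum_mono mult_left_mono member_le_sum) (auto simp: e_def)
    also have "\<dots> = cmod (complex_of_real (\<Sum>k<m. cmod (d k)) * gaussian_comb \<beta> m (\<lambda>_. 1) x)"
      unfolding gaussian_comb_def e_def
      by (simp add: norm_mult sum_distrib_right sum_nonneg del: of_real_sum flip: of_real_sum)
    finally show ?thesis .
  qed
  then have "l2_norm (gaussian_comb \<beta> m d)
      \<le> l2_norm (\<lambda>x. complex_of_real (\<Sum>k<m. cmod (d k)) * gaussian_comb \<beta> m (\<lambda>_. 1) x)"
    using assms by (intro l2_norm_mono L2_gaussian_comb L2_cmult)
  then show ?thesis
    by (simp add: l2_norm_cmult sum_nonneg del: of_real_sum)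
qed

lemma gaussian_comb_tendsto_l2:
  assumes "\<forall>k<m. 0 < \<beta> k" "\<And>k. k < m \<Longrightarrow> (\<lambda>N. d N k) \<longlonglongrightarrow> e k"
  shows "(\<lambda>N. l2_norm (\<lambda>x. gaussian_comb \<beta> m (d N) x - gaussian_comb \<beta> m e x)) \<longlonglongrightarrow> 0"
proof (rule tendsto_sandwich)
  define K where "K = l2_norm (gaussian_comb \<beta> m (\<lambda>_. 1))"
  show "\<forall>\<^sub>F N in sequentially. 0 \<le> l2_norm (\<lambda>x. gaussian_comb \<beta> m (d N) x - gaussian_comb \<beta> m e x)"
    by (simp add: l2_norm_def)
  show "\<forall>\<^sub>F N in sequentially. l2_norm (\<lambda>x. gaussian_comb \<beta> m (d N) x - gaussian_comb \<beta> m e x)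
      \<le> (\<Sum>k<m. cmod (d N k - e k)) * K"
    unfolding gaussian_comb_diff K_def using l2_norm_gaussian_comb_le[OF assms(1)] by simp
  have "(\<lambda>N. (\<Sum>k<m. cmod (d N k - e k)) * K) \<longlonglongrightarrow> (\<Sum>k<m. cmod (e k - e k)) * K"
    using assms(2) by (intro tendsto_intros) auto
  then show "(\<lambda>N. (\<Sum>k<m. cmod (d N k - e k)) * K) \<longlonglongrightarrow> 0"
    by simp
qed (rule tendsto_const)

lemma arctan_term_at_imaginary:
  fixes a s :: real
  assumes "s \<noteq> 0"
  shows "complex_of_real ((-1) ^ n / real (2 * n + 1) * s ^ (2 * n + 1)) * (\<i> * complex_of_real (a / s)) ^ (2 * n + 1)
    = \<i> * complex_of_real (a ^ (2 * n + 1) / real (2 * n + 1))"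
proof -
  define r where "r = (-1) ^ n / real (2 * n + 1) * s ^ (2 * n + 1)"
  define q where "q = (-1) ^ n * (a / s) ^ (2 * n + 1)"
  have "\<i> ^ (2 * n + 1) = \<i> * (-1) ^ n"
    by (simp add: power_mult)
  then have "(\<i> * complex_of_real (a / s)) ^ (2 * n + 1) = \<i> * complex_of_real q"
    unfolding q_def by (simp only: power_mult_distrib of_real_mult of_real_power of_real_minus of_real_1 mult.assoc)
  then have "complex_of_real r * (\<i> * complex_of_real (a / s)) ^ (2 * n + 1) = \<i> * complex_of_real (r * q)"
    by (simp only: of_real_mult mult.left_commute)
  also have "r * q = a ^ (2 * n + 1) / real (2 * n + 1)"
    using assms unfolding r_def q_def by (simp add: power_divide flip: power_mult_distrib)
  finally show ?thesis
    unfolding r_def .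
qed

lemma summable_odd_powers_over_odd:
  fixes a :: real
  assumes "\<bar>a\<bar> < 1"
  shows "summable (\<lambda>n. a ^ (2 * n + 1) / real (2 * n + 1))"
proof (rule summable_comparison_test)
  show "summable (\<lambda>n. \<bar>a\<bar> ^ n)"
    using assms by simp
  show "\<exists>N. \<forall>n\<ge>N. norm (a ^ (2 * n + 1) / real (2 * n + 1)) \<le> \<bar>a\<bar> ^ n"
  proof (intro exI allI impI)
    fix n :: nat
    have "norm (a ^ (2 * n + 1) / real (2 * n + 1)) = \<bar>a\<bar> ^ (2 * n + 1) / real (2 * n + 1)"
      by (simp add: power_abs abs_mult)
    also have "\<dots> \<le> \<bar>a\<bar> ^ (2 * n + 1)"
      using divide_left_mono[of 1 "real (2 * n + 1)" "\<bar>a\<bar> ^ (2 * n + 1)"] by simp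
    also have "\<dots> \<le> \<bar>a\<bar> ^ n"
      using assms by (intro power_decreasing) auto
    finally show "norm (a ^ (2 * n + 1) / real (2 * n + 1)) \<le> \<bar>a\<bar> ^ n" .
  qed
qed

lemma summable_arctan_series_imaginary:
  fixes a s :: real
  assumes "s \<noteq> 0" "\<bar>a\<bar> < 1"
  shows "summable (\<lambda>n. complex_of_real ((-1) ^ n / real (2 * n + 1) * s ^ (2 * n + 1))
    * (\<i> * complex_of_real (a / s)) ^ (2 * n + 1))"
  unfolding arctan_term_at_imaginary[OF assms(1)]
  using assms(2) by (intro summable_mult summable_of_real summable_odd_powers_over_odd)

lemma in_dom_S_gaussian_comb:
  fixes \<epsilon> :: real
  assumes \<beta>_pos: "\<forall>k<m. 0 < \<beta> k"
    and summable: "\<And>k. k < m \<Longrightarrow> summable (\<lambda>n. complex_of_real ((-1) ^ n / real (2 * n + 1) * sqrt \<epsilon> ^ (2 * n + 1))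
          * (\<i> * complex_of_real (\<beta> k)) ^ (2 * n + 1))"
  shows "in_dom_S \<epsilon> (gaussian_comb \<beta> m c)"
proof -
  define w where "w n = complex_of_real ((-1) ^ n / real (2 * n + 1) * sqrt \<epsilon> ^ (2 * n + 1))" for n
  define z where "z k = \<i> * complex_of_real (\<beta> k)" for k
  define g where "g n = gaussian_comb \<beta> m (\<lambda>k. z k ^ (2 * n + 1) * c k)" for n
  define L where "L = gaussian_comb \<beta> m (\<lambda>k. (\<Sum>n. w n * z k ^ (2 * n + 1)) * c k)"
  have partial_sum_eq:
    "(\<Sum>n\<le>N. w n * g n x) = gaussian_comb \<beta> m (\<lambda>k. (\<Sum>n\<le>N. w n * z k ^ (2 * n + 1)) * c k) x" for N x
    by (simp add: g_def gaussian_comb_sum sum_distrib_right mult.assoc)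
  have "(\<lambda>N. (\<Sum>n\<le>N. w n * z k ^ (2 * n + 1)) * c k) \<longlonglongrightarrow> (\<Sum>n. w n * z k ^ (2 * n + 1)) * c k"
    if "k < m" for k
    using summable[OF that] unfolding w_def z_def by (intro tendsto_mult_right summable_LIMSEQ')
  then have "(\<lambda>N. l2_norm (\<lambda>x. (\<Sum>n\<le>N. w n * g n x) - L x)) \<longlonglongrightarrow> 0"
    unfolding partial_sum_eq L_def using \<beta>_pos by (intro gaussian_comb_tendsto_l2)
  moreover have "tpow_rel (2 * n + 1) (gaussian_comb \<beta> m c) (g n)" for n
    unfolding g_def z_def using \<beta>_pos by (rule tpow_rel_gaussian_comb)
  moreover have "L2 (gaussian_comb \<beta> m c)" "L2 L"
    unfolding L_def using \<beta>_pos by (simp_all add: L2_gaussian_comb)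
  moreover have "AE x in lborel. gaussian_comb \<beta> m c (- x) = gaussian_comb \<beta> m c x"
    by (simp add: gaussian_comb_def)
  ultimately show ?thesis
    unfolding in_dom_S_def w_def by blast
qed

theorem lemma3p2:
  fixes \<epsilon> :: real and m :: nat and c :: "nat \<Rightarrow> complex" and \<alpha> :: "nat \<Rightarrow> real"
  assumes "0 < \<epsilon>" and "\<epsilon> \<le> 1"
    and "\<forall>k<m. 0 < \<alpha> k \<and> \<alpha> k < 1"
  shows "in_dom_S \<epsilon> (\<lambda>x. \<Sum>k<m. c k * complex_of_real (exp (- \<alpha> k * x\<^sup>2 / (2 * sqrt \<epsilon>))))"
proof -
  define \<beta> where "\<beta> k = \<alpha> k / sqrt \<epsilon>" for k
  have "- \<alpha> k * x\<^sup>2 / (2 * sqrt \<epsilon>) = - \<beta> k * x\<^sup>2 / 2" for k x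
    by (simp add: \<beta>_def)
  then have f_eq: "(\<lambda>x. \<Sum>k<m. c k * complex_of_real (exp (- \<alpha> k * x\<^sup>2 / (2 * sqrt \<epsilon>)))) = gaussian_comb \<beta> m c"
    unfolding gaussian_comb_def by (simp only:)
  have "summable (\<lambda>n. complex_of_real ((-1) ^ n / real (2 * n + 1) * sqrt \<epsilon> ^ (2 * n + 1))
      * (\<i> * complex_of_real (\<beta> k)) ^ (2 * n + 1))" if "k < m" for k
    unfolding \<beta>_def using assms(1,3) that by (intro summable_arctan_series_imaginary) auto
  moreover have "\<forall>k<m. 0 < \<beta> k"
    using assms(1,3) by (simp add: \<beta>_def)
  ultimately show ?thesis
    unfolding f_eq by (intro in_dom_S_gaussian_comb)
qed

end
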